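(* Let $I$ be a connected and locally connected topological space and $h:I\to\mathbb{R}$ a positive continuous function attaining its lower bound at $v\in I$. For $y,z\in I$ define $$\lambda(y,z)=\sup\{\lambda : C_{y,\lambda}=C_{z,\lambda},\ \lambda\le h(y),\ \lambda\le h(z)\}.$$ Then for fixed $y$ the function $z\mapsto\lambda(y,z)$ is lower semi-continuous: for every $z_0\in I$, $$\liminf_{z\to z_0}\lambda(y,z)\ge\lambda(y,z_0).$$
   Context: For $x\in I$ and $\lambda\le h(x)$, $C_{x,\lambda}$ denotes the maximal connected subset of $\{y\in I: h(y)\ge\lambda\}$ containing $x$. *)

theory Defs
  imports "HOL-Analysis.Analysis"
begin

definition level_comp :: "'a topology \<Rightarrow> ('a \<Rightarrow> real) \<Rightarrow> 'a \<Rightarrow> real \<Rightarrow> 'a set" where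
  "level_comp X h x l =
     connected_component_of_set (subtopology X {y \<in> topspace X. l \<le> h y}) x"

definition merge_level :: "'a topology \<Rightarrow> ('a \<Rightarrow> real) \<Rightarrow> 'a \<Rightarrow> 'a \<Rightarrow> real" where
  "merge_level X h y z =
     Sup {l. level_comp X h y l = level_comp X h z l \<and> l \<le> h y \<and> l \<le> h z}"

end

theory Submission
  imports Defs
begin

text \<open>Two points lie in a common component of the superlevel set at height \<open>l\<close> iff some connected
  set inside that superlevel set joins them. If \<open>l < \<lambda>(y,z\<^sub>0)\<close>, such a set \<open>T\<close> joins \<open>y\<close> and
  \<open>z\<^sub>0\<close>, and \<open>h z\<^sub>0 > l\<close>. By local connectedness the component \<open>W\<close> of \<open>z\<^sub>0\<close> in the open set
  \<open>{h > l}\<close> is an open neighbourhood of \<open>z\<^sub>0\<close>, and for \<open>z \<in> W\<close> the connected set \<open>T \<union> W\<close> joins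
  \<open>y\<close> and \<open>z\<close> at height \<open>l\<close>, so \<open>\<lambda>(y,z) \<ge> l\<close>. The minimum of \<open>h\<close> is only needed to make the
  supremum defining \<open>\<lambda>\<close> range over a nonempty set.\<close>

definition merge_levels :: "'a topology \<Rightarrow> ('a \<Rightarrow> real) \<Rightarrow> 'a \<Rightarrow> 'a \<Rightarrow> real set" where
  "merge_levels X h y z =
     {l. level_comp X h y l = level_comp X h z l \<and> l \<le> h y \<and> l \<le> h z}"

lemma merge_level_eq_Sup: "merge_level X h y z = Sup (merge_levels X h y z)"
  unfolding merge_level_def merge_levels_def ..

lemma bdd_above_merge_levels: "bdd_above (merge_levels X h y z)"
  unfolding merge_levels_def by (rule bdd_aboveI[of _ "h y"]) auto

lemma connected_component_of_superlevel_iff: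
  "connected_component_of (subtopology X {x \<in> topspace X. l \<le> h x}) y z \<longleftrightarrow>
   (\<exists>T. connectedin X T \<and> y \<in> T \<and> z \<in> T \<and> T \<subseteq> {x \<in> topspace X. l \<le> h x})"
  unfolding connected_component_of_def by (auto simp: connectedin_subtopology)

lemma mem_merge_levels:
  assumes "connectedin X T" "y \<in> T" "z \<in> T" "T \<subseteq> {x \<in> topspace X. l \<le> h x}"
  shows "l \<in> merge_levels X h y z"
proof -
  have "connected_component_of (subtopology X {x \<in> topspace X. l \<le> h x}) y z"
    unfolding connected_component_of_superlevel_iff using assms by blast
  then have "level_comp X h y l = level_comp X h z l"
    unfolding level_comp_def by (metis connected_component_of_equiv)
  moreover have "l \<le> h y" "l \<le> h z"
    using assms by auto
  ultimately show ?thesis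
    unfolding merge_levels_def by blast
qed

lemma le_merge_level:
  assumes "connectedin X T" "y \<in> T" "z \<in> T" "T \<subseteq> {x \<in> topspace X. l \<le> h x}"
  shows "l \<le> merge_level X h y z"
  unfolding merge_level_eq_Sup
  using mem_merge_levels[OF assms] by (rule cSup_upper[OF _ bdd_above_merge_levels])

lemma merge_levels_nonempty:
  assumes "connected_space X" "y \<in> topspace X" "z \<in> topspace X"
    and "\<forall>x \<in> topspace X. b \<le> h x"
  shows "merge_levels X h y z \<noteq> {}"
proof -
  have "b \<in> merge_levels X h y z"
    using assms by (intro mem_merge_levels[of X "topspace X"]) (auto simp: connectedin_topspace)
  then show ?thesis
    by blast
qed

lemma merge_level_le_right:
  assumes "merge_levels X h y z \<noteq> {}"
  shows "merge_level X h y z \<le> h z"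
  unfolding merge_level_eq_Sup
proof (rule cSup_least[OF assms])
  show "l \<le> h z" if "l \<in> merge_levels X h y z" for l
    using that unfolding merge_levels_def by blast
qed

lemma connected_superlevel_below_merge_level:
  assumes "merge_levels X h y z \<noteq> {}" "l < merge_level X h y z" "z \<in> topspace X"
  shows "\<exists>T. connectedin X T \<and> y \<in> T \<and> z \<in> T \<and> T \<subseteq> {x \<in> topspace X. l \<le> h x}"
proof -
  obtain l' where l': "l' \<in> merge_levels X h y z" "l < l'"
    using assms(2) less_cSup_iff[OF assms(1) bdd_above_merge_levels]
    unfolding merge_level_eq_Sup by blast
  let ?Y = "subtopology X {x \<in> topspace X. l' \<le> h x}"
  have "z \<in> level_comp X h z l'"
    using l'(1) assms(3) unfolding level_comp_def merge_levels_def
    by (simp add: connected_component_of_refl)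
  also have "level_comp X h z l' = level_comp X h y l'"
    using l'(1) unfolding merge_levels_def by simp
  finally have "connected_component_of ?Y y z"
    unfolding level_comp_def by simp
  then obtain T where "connectedin X T" "y \<in> T" "z \<in> T" "T \<subseteq> {x \<in> topspace X. l' \<le> h x}"
    unfolding connected_component_of_superlevel_iff by blast
  then show ?thesis
    using l'(2) by (intro exI[of _ T]) force
qed

lemma merge_level_locally_bounded_below:
  assumes "locally_connected_space X" "continuous_map X euclideanreal h"
    and "merge_levels X h y z0 \<noteq> {}" "z0 \<in> topspace X" "l < merge_level X h y z0"
  shows "\<exists>W. openin X W \<and> z0 \<in> W \<and> (\<forall>z \<in> W. l \<le> merge_level X h y z)"
proof -
  obtain T where T: "connectedin X T" "y \<in> T" "z0 \<in> T" "T \<subseteq> {x \<in> topspace X. l \<le> h x}"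
    using connected_superlevel_below_merge_level[OF assms(3,5,4)] by blast
  define U where "U = {x \<in> topspace X. h x \<in> {l<..}}"
  have "openin X U"
    unfolding U_def using openin_continuous_map_preimage[OF assms(2), of "{l<..}"] by simp
  moreover have "z0 \<in> U"
    using merge_level_le_right[OF assms(3)] assms(4,5) unfolding U_def by simp
  ultimately have W: "openin X (connected_component_of_set (subtopology X U) z0)"
                     "z0 \<in> connected_component_of_set (subtopology X U) z0"
    using assms(1,4) by (auto simp: locally_connected_space_eq_open_connected_component_of
                                    connected_component_of_refl)
  have "l \<le> merge_level X h y z" if z: "z \<in> connected_component_of_set (subtopology X U) z0" for z
  proof -
    obtain S where "connectedin (subtopology X U) S" "z0 \<in> S" "z \<in> S"
      using z unfolding connected_component_of_def by blast
    then have S: "connectedin X S" "S \<subseteq> U" "z0 \<in> S" "z \<in> S"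
      by (simp_all add: connectedin_subtopology)
    have "connectedin X (T \<union> S)"
      using T(1,3) S(1,3) by (intro connectedin_Un) auto
    moreover have "T \<union> S \<subseteq> {x \<in> topspace X. l \<le> h x}"
      using T(4) S(2) unfolding U_def by auto
    ultimately show ?thesis
      using T(2) S(4) by (intro le_merge_level[of X "T \<union> S"]) auto
  qed
  then show ?thesis
    using W by blast
qed

theorem mainTheorem7:
  fixes X :: "'a topology" and h :: "'a \<Rightarrow> real" and v y z0 :: 'a
  assumes "connected_space X" and "locally_connected_space X"
    and "continuous_map X euclideanreal h"
    and "\<forall>x\<in>topspace X. h x > 0"
    and "v \<in> topspace X" and "\<forall>x\<in>topspace X. h v \<le> h x"
    and "y \<in> topspace X" and "z0 \<in> topspace X"
  shows "Liminf (atin X z0) (\<lambda>z. ereal (merge_level X h y z)) \<ge> ereal (merge_level X h y z0)"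
  unfolding le_Liminf_iff
proof (intro allI impI)
  fix c assume "c < ereal (merge_level X h y z0)"
  then obtain l where "c < ereal l" "ereal l < ereal (merge_level X h y z0)"
    using ereal_dense2 by blast
  then have l: "c < ereal l" "l < merge_level X h y z0"
    by simp_all
  have "merge_levels X h y z0 \<noteq> {}"
    using merge_levels_nonempty[OF assms(1,7,8,6)] .
  then obtain W where W: "openin X W" "z0 \<in> W" "\<forall>z \<in> W. l \<le> merge_level X h y z"
    using merge_level_locally_bounded_below[OF assms(2,3) _ assms(8) l(2)] by blast
  have "c < ereal (merge_level X h y z)" if "z \<in> W" for z
    using l(1) W(3) that by (simp add: order_less_le_trans)
  then show "\<forall>\<^sub>F z in atin X z0. c < ereal (merge_level X h y z)"
    unfolding eventually_atin using W(1,2) by blast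
qed

end
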